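(* Let $G$ be a finite group and $N\lhd G$ a normal subgroup which is simple and non-abelian. Let $r\in N$. If $\mathcal O_r^G\cap N\neq \mathcal O_r^N$, then $\mathcal O_r^G$ is of type C.
   Context: For $H\leqslant G$ and $g\in G$, $\mathcal O_g^H$ is the orbit of $g$ under conjugation by $H$. A conjugacy class $\mathcal O$ of a finite group $G$ is of type C if there are $H\leqslant G$ and $r,s\in H\cap\mathcal O$ such that $rs\neq sr$, $H=\langle \mathcal O_r^H,\mathcal O_s^H\rangle$, $\mathcal O_r^H\neq\mathcal O_s^H$, and either $\min\{|\mathcal O_r^H|,|\mathcal O_s^H|\}>2$ or $\max\{|\mathcal O_r^H|,|\mathcal O_s^H|\}>4$. *)

theory Defs
  imports "HOL-Algebra.Algebra"
begin

definition conj_orbit :: "('a, 'b) monoid_scheme \<Rightarrow> 'a set \<Rightarrow> 'a \<Rightarrow> 'a set" where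
  "conj_orbit G H g = {h \<otimes>\<^bsub>G\<^esub> g \<otimes>\<^bsub>G\<^esub> inv\<^bsub>G\<^esub> h | h. h \<in> H}"

definition type_C :: "('a, 'b) monoid_scheme \<Rightarrow> 'a set \<Rightarrow> bool" where
  "type_C G Cl \<longleftrightarrow>
     (\<exists>H r s. subgroup H G \<and> r \<in> H \<inter> Cl \<and> s \<in> H \<inter> Cl \<and>
        r \<otimes>\<^bsub>G\<^esub> s \<noteq> s \<otimes>\<^bsub>G\<^esub> r \<and>
        H = generate G (conj_orbit G H r \<union> conj_orbit G H s) \<and>
        conj_orbit G H r \<noteq> conj_orbit G H s \<and>
        (min (card (conj_orbit G H r)) (card (conj_orbit G H s)) > 2 \<or>
         max (card (conj_orbit G H r)) (card (conj_orbit G H s)) > 4))"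

end

theory Submission
  imports Defs
begin

text \<open>
  Since \<open>N\<close> is normal, the class \<open>O\<^sub>r\<^sup>G\<close> lies in \<open>N\<close> and is a union of
  \<open>N\<close>-classes; by hypothesis it contains some \<open>s \<notin> O\<^sub>r\<^sup>N\<close>. In a non-abelian
  simple group every nontrivial class generates the group and the centre is trivial.
  So if all of \<open>O\<^sub>r\<^sup>N\<close> commuted with \<open>s\<close>, then \<open>s\<close> would be central in \<open>N\<close>,
  i.e. trivial; hence some \<open>a \<in> O\<^sub>r\<^sup>N\<close> and \<open>b \<in> O\<^sub>s\<^sup>N\<close> do not commute, and
  \<open>H = N\<close> witnesses type C. Both \<open>N\<close>-classes have more than two elements: in a
  conjugation-invariant set of at most two elements any two elements commute, so
  if such a set generated \<open>N\<close>, then \<open>N\<close> would be abelian.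
\<close>

lemma (in group) conj_orbit_self:
  assumes "subgroup H G" "x \<in> carrier G"
  shows "x \<in> conj_orbit G H x"
proof -
  have "\<one> \<in> H" using assms(1) by (rule subgroup.one_closed)
  moreover have "x = \<one> \<otimes> x \<otimes> inv \<one>" using assms(2) by simp
  ultimately show ?thesis unfolding conj_orbit_def by blast
qed

lemma (in group) conj_orbit_conj_closed:
  assumes "subgroup H G" "x \<in> carrier G" "y \<in> conj_orbit G H x" "h \<in> H"
  shows "h \<otimes> y \<otimes> inv h \<in> conj_orbit G H x"
proof -
  obtain k where k: "k \<in> H" "y = k \<otimes> x \<otimes> inv k"
    using assms(3) unfolding conj_orbit_def by blast
  have "h \<in> carrier G" "k \<in> carrier G"
    using assms(1,4) k(1) by (auto intro: subgroup.mem_carrier)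
  then have "h \<otimes> y \<otimes> inv h = (h \<otimes> k) \<otimes> x \<otimes> inv (h \<otimes> k)"
    using k(2) assms(2) by (simp add: m_assoc inv_mult_group)
  moreover have "h \<otimes> k \<in> H" using assms(1,4) k(1) by (rule subgroup.m_closed)
  ultimately show ?thesis unfolding conj_orbit_def by blast
qed

lemma (in group) conj_orbit_subset_subgroup:
  assumes "subgroup H G" "x \<in> H"
  shows "conj_orbit G H x \<subseteq> H"
  using assms unfolding conj_orbit_def
  by (auto intro!: subgroup.m_closed subgroup.m_inv_closed)

lemma (in group) conj_orbit_subset_normal:
  assumes "N \<lhd> G" "H \<subseteq> carrier G" "x \<in> N"
  shows "conj_orbit G H x \<subseteq> N"
  using assms unfolding conj_orbit_def by (auto simp: normal_inv_iff)

lemma conj_orbit_mono: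
  "H \<subseteq> K \<Longrightarrow> conj_orbit G H x \<subseteq> conj_orbit G K x"
  unfolding conj_orbit_def by blast

lemma (in group) conj_orbit_subset_carrier:
  assumes "subgroup H G" "x \<in> carrier G"
  shows "conj_orbit G H x \<subseteq> carrier G"
  using conj_orbit_mono[OF subgroup.subset[OF assms(1)]]
    conj_orbit_subset_subgroup[OF subgroup_self assms(2)]
  by (rule order_trans)

lemma (in group) conj_orbit_eq_one_iff:
  assumes "H \<subseteq> carrier G" "x \<in> carrier G" "y \<in> conj_orbit G H x"
  shows "y = \<one> \<longleftrightarrow> x = \<one>"
  using assms unfolding conj_orbit_def by (auto simp: inv_solve_right')

lemma (in group) conj_orbit_sym:
  assumes "subgroup H G" "x \<in> carrier G" "y \<in> conj_orbit G H x"
  shows "x \<in> conj_orbit G H y"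
proof -
  obtain h where h: "h \<in> H" "y = h \<otimes> x \<otimes> inv h"
    using assms(3) unfolding conj_orbit_def by blast
  have "h \<in> carrier G" using assms(1) h(1) by (rule subgroup.mem_carrier)
  then have "x = inv h \<otimes> y \<otimes> inv (inv h)"
    using h(2) assms(2) by (simp add: m_assoc[symmetric]) (simp add: m_assoc)
  moreover have "inv h \<in> H" using assms(1) h(1) by (rule subgroup.m_inv_closed)
  ultimately show ?thesis unfolding conj_orbit_def by blast
qed

lemma (in group) conj_orbit_subset_conj_orbit:
  assumes "subgroup H G" "x \<in> carrier G" "y \<in> conj_orbit G H x"
  shows "conj_orbit G H y \<subseteq> conj_orbit G H x"
  using conj_orbit_conj_closed[OF assms] unfolding conj_orbit_def[of G H y] by blast

lemma (in group) conj_orbit_eq: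
  assumes "subgroup H G" "x \<in> carrier G" "y \<in> conj_orbit G H x"
  shows "conj_orbit G H y = conj_orbit G H x"
proof
  show "conj_orbit G H y \<subseteq> conj_orbit G H x" using assms by (rule conj_orbit_subset_conj_orbit)
  have "y \<in> carrier G" using conj_orbit_subset_carrier[OF assms(1,2)] assms(3) by blast
  then show "conj_orbit G H x \<subseteq> conj_orbit G H y"
    using conj_orbit_subset_conj_orbit[OF assms(1) _ conj_orbit_sym[OF assms]] by blast
qed

lemma (in group) generate_commute:
  assumes "S \<subseteq> carrier G" "b \<in> carrier G" "\<And>a. a \<in> S \<Longrightarrow> a \<otimes> b = b \<otimes> a"
    and "h \<in> generate G S"
  shows "h \<otimes> b = b \<otimes> h"
  using assms(4)
proof (induction rule: generate.induct)
  case one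
  show ?case using assms(2) by simp
next
  case (incl a)
  then show ?case by (rule assms(3))
next
  case (inv a)
  have a: "a \<in> carrier G" using inv assms(1) by blast
  have "inv a \<otimes> b = inv a \<otimes> (b \<otimes> a) \<otimes> inv a" using a assms(2) by (simp add: m_assoc)
  also have "\<dots> = inv a \<otimes> (a \<otimes> b) \<otimes> inv a" using assms(3)[OF inv] by simp
  also have "\<dots> = b \<otimes> inv a" using a assms(2) by (simp add: m_assoc[symmetric])
  finally show ?case .
next
  case (eng h1 h2)
  have h: "h1 \<in> carrier G" "h2 \<in> carrier G"
    using eng(1,2) generate_in_carrier[OF assms(1)] by auto
  have "h1 \<otimes> h2 \<otimes> b = h1 \<otimes> (b \<otimes> h2)" using h assms(2) eng(4) by (simp add: m_assoc)
  also have "\<dots> = b \<otimes> (h1 \<otimes> h2)" using h assms(2) eng(3) by (simp add: m_assoc[symmetric])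
  finally show ?case .
qed

lemma (in group) comm_group_generated_by_commuting:
  assumes "subgroup N G" "generate G S = N"
    and "\<And>u v. u \<in> S \<Longrightarrow> v \<in> S \<Longrightarrow> u \<otimes> v = v \<otimes> u"
  shows "comm_group (G\<lparr>carrier := N\<rparr>)"
proof -
  have N: "N \<subseteq> carrier G" using assms(1) by (rule subgroup.subset)
  have S: "S \<subseteq> carrier G" using N assms(2) by (auto dest: generate.incl)
  have S_central: "h \<otimes> v = v \<otimes> h" if "v \<in> S" "h \<in> N" for v h
  proof (rule generate_commute[OF S])
    show "v \<in> carrier G" using that(1) S by blast
    show "h \<in> generate G S" using that(2) assms(2) by simp
  qed (rule assms(3)[OF _ that(1)])
  have N_commute: "h \<otimes> y = y \<otimes> h" if "y \<in> N" "h \<in> N" for y h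
  proof (rule generate_commute[OF S])
    show "y \<in> carrier G" using that(1) N by blast
    show "h \<in> generate G S" using that(2) assms(2) by simp
  qed (rule S_central[OF _ that(1), symmetric])
  show ?thesis
  proof (rule group.group_comm_groupI)
    show "group (G\<lparr>carrier := N\<rparr>)" using assms(1) by (rule subgroup_imp_group)
  qed (simp add: N_commute)
qed

lemma (in group) generate_conj_closed_simple:
  assumes "subgroup N G" "simple_group (G\<lparr>carrier := N\<rparr>)"
    and "S \<subseteq> N" "\<And>g s. g \<in> N \<Longrightarrow> s \<in> S \<Longrightarrow> g \<otimes> s \<otimes> inv g \<in> S"
    and "x \<in> S" "x \<noteq> \<one>"
  shows "generate G S = N"
proof -
  interpret N: simple_group "G\<lparr>carrier := N\<rparr>" by fact
  have "generate (G\<lparr>carrier := N\<rparr>) S \<lhd> G\<lparr>carrier := N\<rparr>"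
    using assms(1,3,4) by (intro N.normal_generateI) auto
  then have "generate G S = N \<or> generate G S = {\<one>}"
    using N.no_real_normal_subgroup generate_consistent[OF assms(3,1)] by simp
  moreover have "x \<in> generate G S" using assms(5) by (rule generate.incl)
  ultimately show ?thesis using assms(6) by auto
qed

lemma (in group) generate_conj_orbit_simple:
  assumes "subgroup N G" "simple_group (G\<lparr>carrier := N\<rparr>)" "x \<in> N" "x \<noteq> \<one>"
  shows "generate G (conj_orbit G N x) = N"
proof -
  have x: "x \<in> carrier G" using assms(1,3) by (rule subgroup.mem_carrier)
  show ?thesis
  proof (rule generate_conj_closed_simple[OF assms(1,2)])
    show "conj_orbit G N x \<subseteq> N" using assms(1,3) by (rule conj_orbit_subset_subgroup)
    show "x \<in> conj_orbit G N x" using assms(1) x by (rule conj_orbit_self)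
  qed (use assms(1,4) x conj_orbit_conj_closed in auto)
qed

lemma (in group) central_eq_one_simple_nonabelian:
  assumes "subgroup N G" "simple_group (G\<lparr>carrier := N\<rparr>)" "\<not> comm_group (G\<lparr>carrier := N\<rparr>)"
    and "b \<in> N" "\<And>u. u \<in> N \<Longrightarrow> u \<otimes> b = b \<otimes> u"
  shows "b = \<one>"
proof (rule ccontr)
  assume "b \<noteq> \<one>"
  define Z where "Z = {z \<in> N. \<forall>u\<in>N. u \<otimes> z = z \<otimes> u}"
  have "g \<otimes> z \<otimes> inv g = z" if "z \<in> Z" "g \<in> N" for g z
  proof -
    have "g \<in> carrier G" "z \<in> carrier G"
      using that assms(1) unfolding Z_def by (auto intro: subgroup.mem_carrier)
    moreover have "g \<otimes> z = z \<otimes> g" using that unfolding Z_def by blast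
    ultimately show ?thesis by (simp add: m_assoc)
  qed
  moreover have "b \<in> Z" using assms(4,5) unfolding Z_def by blast
  ultimately have "generate G Z = N"
    using assms(1,2) \<open>b \<noteq> \<one>\<close> by (intro generate_conj_closed_simple) (auto simp: Z_def)
  with assms(1) have "comm_group (G\<lparr>carrier := N\<rparr>)"
    by (rule comm_group_generated_by_commuting) (unfold Z_def, blast)
  then show False using assms(3) by blast
qed

lemma (in group) conj_orbits_not_commute:
  assumes "subgroup N G" "simple_group (G\<lparr>carrier := N\<rparr>)" "\<not> comm_group (G\<lparr>carrier := N\<rparr>)"
    and "x \<in> N" "x \<noteq> \<one>" "y \<in> N" "y \<noteq> \<one>"
  shows "\<exists>a \<in> conj_orbit G N x. \<exists>b \<in> conj_orbit G N y. a \<otimes> b \<noteq> b \<otimes> a"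
proof (rule ccontr)
  assume all_commute: "\<not> ?thesis"
  have y: "y \<in> carrier G" using assms(1,6) by (rule subgroup.mem_carrier)
  then have "\<And>a. a \<in> conj_orbit G N x \<Longrightarrow> a \<otimes> y = y \<otimes> a"
    using all_commute conj_orbit_self[OF assms(1)] by blast
  moreover have "conj_orbit G N x \<subseteq> carrier G"
    using assms(1) subgroup.mem_carrier[OF assms(1,4)] by (rule conj_orbit_subset_carrier)
  ultimately have "u \<otimes> y = y \<otimes> u" if "u \<in> N" for u
    using generate_commute[OF _ y] generate_conj_orbit_simple[OF assms(1,2,4,5)] that by blast
  then have "y = \<one>" by (rule central_eq_one_simple_nonabelian[OF assms(1-3,6)])
  then show False using assms(7) by blast
qed

lemma (in group) conj_closed_card_le_2_commute:
  assumes "finite S" "card S \<le> 2" "u \<in> S" "v \<in> S" "u \<in> carrier G" "v \<in> carrier G"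
    and "u \<otimes> v \<otimes> inv u \<in> S"
  shows "u \<otimes> v = v \<otimes> u"
proof (cases "u = v")
  case False
  have "{u, v} = S" using card_seteq[OF assms(1), of "{u, v}"] assms(2-4) False by auto
  moreover have "u \<otimes> v = (u \<otimes> v \<otimes> inv u) \<otimes> u" using assms(5,6) by (simp add: m_assoc)
  ultimately show ?thesis using assms(5-7) False by auto
qed simp

lemma (in group) card_conj_orbit_gt_2:
  assumes "subgroup N G" "simple_group (G\<lparr>carrier := N\<rparr>)" "\<not> comm_group (G\<lparr>carrier := N\<rparr>)"
    and "finite N" "x \<in> N" "x \<noteq> \<one>"
  shows "2 < card (conj_orbit G N x)"
proof (rule ccontr)
  assume "\<not> 2 < card (conj_orbit G N x)"
  have x: "x \<in> carrier G" using assms(1,5) by (rule subgroup.mem_carrier)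
  have orbit_N: "conj_orbit G N x \<subseteq> N" using assms(1,5) by (rule conj_orbit_subset_subgroup)
  have "u \<otimes> v = v \<otimes> u" if "u \<in> conj_orbit G N x" "v \<in> conj_orbit G N x" for u v
  proof (rule conj_closed_card_le_2_commute)
    show "finite (conj_orbit G N x)" using assms(4) orbit_N by (rule finite_subset[rotated])
    show "u \<otimes> v \<otimes> inv u \<in> conj_orbit G N x"
      using conj_orbit_conj_closed[OF assms(1) x] that orbit_N by blast
    show "u \<in> carrier G" "v \<in> carrier G"
      using that conj_orbit_subset_carrier[OF assms(1) x] by blast+
  qed (use that \<open>\<not> 2 < card (conj_orbit G N x)\<close> in auto)
  then have "comm_group (G\<lparr>carrier := N\<rparr>)"
    using generate_conj_orbit_simple[OF assms(1,2,5,6)]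
    by (intro comm_group_generated_by_commuting[OF assms(1)])
  then show False using assms(3) by blast
qed

lemma (in group) type_C_if_not_commute_in_distinct_orbits:
  assumes "subgroup N G" "simple_group (G\<lparr>carrier := N\<rparr>)" "\<not> comm_group (G\<lparr>carrier := N\<rparr>)"
    and "finite N" "a \<in> N \<inter> Cl" "b \<in> N \<inter> Cl" "a \<otimes> b \<noteq> b \<otimes> a"
    and "conj_orbit G N a \<noteq> conj_orbit G N b"
  shows "type_C G Cl"
proof -
  have a: "a \<noteq> \<one>" and b: "b \<noteq> \<one>"
    using assms(1,5-7) subgroup.mem_carrier by fastforce+
  have "N = generate G (conj_orbit G N a)"
    using generate_conj_orbit_simple[OF assms(1,2) _ a] assms(5) by simp
  also have "\<dots> \<subseteq> generate G (conj_orbit G N a \<union> conj_orbit G N b)"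
    by (intro mono_generate) blast
  also have "\<dots> \<subseteq> N"
    using assms(1,5,6) conj_orbit_subset_subgroup by (intro generate_subgroup_incl) auto
  finally have "N = generate G (conj_orbit G N a \<union> conj_orbit G N b)" .
  moreover have "2 < card (conj_orbit G N a)" "2 < card (conj_orbit G N b)"
    using card_conj_orbit_gt_2[OF assms(1-4)] assms(5,6) a b by auto
  ultimately show ?thesis
    unfolding type_C_def using assms(1,5-8) by (intro exI[of _ N] exI[of _ a] exI[of _ b]) auto
qed

lemma (in group) normal_conj_class_not_orbit:
  assumes "N \<lhd> G" "r \<in> N" "conj_orbit G (carrier G) r \<inter> N \<noteq> conj_orbit G N r"
  obtains s where "s \<in> N" "s \<in> conj_orbit G (carrier G) r" "s \<notin> conj_orbit G N r"
proof -
  have "conj_orbit G (carrier G) r \<subseteq> N"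
    using assms(1) subset_refl assms(2) by (rule conj_orbit_subset_normal)
  moreover have "conj_orbit G N r \<subseteq> conj_orbit G (carrier G) r"
    using subgroup.subset[OF normal_imp_subgroup[OF assms(1)]] by (rule conj_orbit_mono)
  ultimately show ?thesis using that assms(3) by blast
qed

lemma (in group) type_C_if_conj_class_not_orbit:
  assumes "subgroup N G" "simple_group (G\<lparr>carrier := N\<rparr>)" "\<not> comm_group (G\<lparr>carrier := N\<rparr>)"
    and "finite N" "r \<in> N" "s \<in> N" "s \<in> conj_orbit G (carrier G) r" "s \<notin> conj_orbit G N r"
  shows "type_C G (conj_orbit G (carrier G) r)"
proof -
  let ?O = "conj_orbit G (carrier G) r"
  have r: "r \<in> carrier G" and s: "s \<in> carrier G"
    using subgroup.mem_carrier[OF assms(1)] assms(5,6) by auto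
  have "s = \<one> \<longleftrightarrow> r = \<one>" using subset_refl r assms(7) by (rule conj_orbit_eq_one_iff)
  then have "r \<noteq> \<one>" "s \<noteq> \<one>" using assms(8) conj_orbit_self[OF assms(1) r] by auto
  then obtain a b where a: "a \<in> conj_orbit G N r" and b: "b \<in> conj_orbit G N s"
    and ab: "a \<otimes> b \<noteq> b \<otimes> a"
    using conj_orbits_not_commute[OF assms(1-3,5) _ assms(6)] by blast
  have "conj_orbit G N a \<noteq> conj_orbit G N b"
    using conj_orbit_eq[OF assms(1) r a] conj_orbit_eq[OF assms(1) s b] assms(8)
      conj_orbit_self[OF assms(1) s] by auto
  moreover have "a \<in> N \<inter> ?O"
    using a conj_orbit_subset_subgroup[OF assms(1,5)] conj_orbit_mono[OF subgroup.subset[OF assms(1)]]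
    by blast
  moreover have "b \<in> N \<inter> ?O"
  proof -
    have "conj_orbit G N s \<subseteq> conj_orbit G (carrier G) s"
      using subgroup.subset[OF assms(1)] by (rule conj_orbit_mono)
    also have "\<dots> = ?O" using subgroup_self r assms(7) by (rule conj_orbit_eq)
    finally show ?thesis using b conj_orbit_subset_subgroup[OF assms(1,6)] by blast
  qed
  ultimately show ?thesis
    using type_C_if_not_commute_in_distinct_orbits[OF assms(1-4)] ab by blast
qed

theorem mainTheorem4:
  fixes G :: "('a, 'b) monoid_scheme" and N :: "'a set" and r :: 'a
  assumes "group G"
    and "finite (carrier G)"
    and "N \<lhd> G"
    and "simple_group (G\<lparr>carrier := N\<rparr>)"
    and "\<not> comm_group (G\<lparr>carrier := N\<rparr>)"
    and "r \<in> N"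
    and "conj_orbit G (carrier G) r \<inter> N \<noteq> conj_orbit G N r"
  shows "type_C G (conj_orbit G (carrier G) r)"
proof -
  interpret group G by fact
  have N: "subgroup N G" using assms(3) by (rule normal_imp_subgroup)
  obtain s where "s \<in> N" "s \<in> conj_orbit G (carrier G) r" "s \<notin> conj_orbit G N r"
    using assms(3,6,7) by (rule normal_conj_class_not_orbit)
  moreover have "finite N" using assms(2) subgroup.subset[OF N] by (rule finite_subset[rotated])
  ultimately show ?thesis using type_C_if_conj_class_not_orbit[OF N assms(4,5) _ assms(6)] by blast
qed

end
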